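(* Let $P=\{S_1,\ldots,S_n\}$ be a homothetic packing of $n$ squares with contact graph $G=([n],E)$. Then every clique of $G$ has at most $4$ vertices, and for every clique $\{i,j,k,\ell\}$ of size $4$ the squares $S_i,S_j,S_k,S_\ell$ share a corner.
   Context: Let $S=\{(x,y): -1\le x,y\le 1\}$. A homothetic packing of $n$ squares is a set $P=\{S_1,\ldots,S_n\}$ with $S_i=r_iS+p_i$, $r_i>0$, $p_i\in\mathbb{R}^2$, such that distinct squares have disjoint interiors. Its contact graph is $G=([n],E)$ where $\{i,j\}\in E$ iff $i\ne j$ and $S_i\cap S_j\ne\emptyset$. Four squares of the packing share a corner if they have a common point $z$ which is a corner (vertex) of each of the four squares (equivalently, they all meet at a single common point, each occupying one of the four quadrants around it). *)

theory Defs
  imports "HOL-Analysis.Analysis"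
begin

definition unit_square :: "(real \<times> real) set" where
  "unit_square = {(x, y). -1 \<le> x \<and> x \<le> 1 \<and> -1 \<le> y \<and> y \<le> 1}"

definition hsquare :: "real \<Rightarrow> real \<times> real \<Rightarrow> (real \<times> real) set" where
  "hsquare r p = (\<lambda>v. r *\<^sub>R v + p) ` unit_square"

definition homothetic_packing ::
  "nat \<Rightarrow> (nat \<Rightarrow> real) \<Rightarrow> (nat \<Rightarrow> real \<times> real) \<Rightarrow> bool" where
  "homothetic_packing n r p \<longleftrightarrow>
     (\<forall>i\<in>{1..n}. r i > 0) \<and>
     (\<forall>i\<in>{1..n}. \<forall>j\<in>{1..n}. i \<noteq> j \<longrightarrow>
        interior (hsquare (r i) (p i)) \<inter> interior (hsquare (r j) (p j)) = {})"

definition contact_edge ::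
  "nat \<Rightarrow> (nat \<Rightarrow> real) \<Rightarrow> (nat \<Rightarrow> real \<times> real) \<Rightarrow> nat \<Rightarrow> nat \<Rightarrow> bool" where
  "contact_edge n r p i j \<longleftrightarrow> i \<in> {1..n} \<and> j \<in> {1..n} \<and> i \<noteq> j \<and>
     hsquare (r i) (p i) \<inter> hsquare (r j) (p j) \<noteq> {}"

definition is_clique ::
  "nat \<Rightarrow> (nat \<Rightarrow> real) \<Rightarrow> (nat \<Rightarrow> real \<times> real) \<Rightarrow> nat set \<Rightarrow> bool" where
  "is_clique n r p C \<longleftrightarrow> C \<subseteq> {1..n} \<and>
     (\<forall>i\<in>C. \<forall>j\<in>C. i \<noteq> j \<longrightarrow> contact_edge n r p i j)"

definition corners :: "real \<Rightarrow> real \<times> real \<Rightarrow> (real \<times> real) set" where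
  "corners r p = {(fst p + s * r, snd p + t * r) | s t. s \<in> {-1, 1} \<and> t \<in> {-1, 1}}"

definition share_corner ::
  "(nat \<Rightarrow> real) \<Rightarrow> (nat \<Rightarrow> real \<times> real) \<Rightarrow> nat set \<Rightarrow> bool" where
  "share_corner r p C \<longleftrightarrow> (\<exists>z. \<forall>i\<in>C. z \<in> corners (r i) (p i))"

end

theory Submission
  imports Defs
begin

text \<open>Squares of a clique pairwise intersect, so by the one-dimensional Helly property in each
coordinate they have a common point z. Every square reaches into at least one of the four
quadrants at z, and two squares with disjoint interiors never reach into the same one. Hence a
clique has at most four squares, and if it has four, each of them reaches into exactly one
quadrant, which forces z to be a corner of each.\<close>

lemma hsquare_eq_box:
  assumes "r > 0"
  shows "hsquare r p = {fst p - r .. fst p + r} \<times> {snd p - r .. snd p + r}"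
proof -
  have unit: "unit_square = cbox (-1, -1) (1, 1)"
    by (auto simp: unit_square_def cbox_Pair_eq)
  show ?thesis
    unfolding hsquare_def unit image_affinity_cbox
    using assms by (cases p) (simp add: cbox_Pair_eq add.commute)
qed

lemma interior_hsquare:
  assumes "r > 0"
  shows "interior (hsquare r p) = {fst p - r <..< fst p + r} \<times> {snd p - r <..< snd p + r}"
  using assms by (simp add: hsquare_eq_box interior_Times)

lemma intervals_pairwise_intersecting_common_point:
  fixes a b :: "'i \<Rightarrow> real"
  assumes "finite C" "C \<noteq> {}"
    and "\<And>i j. i \<in> C \<Longrightarrow> j \<in> C \<Longrightarrow> {a i..b i} \<inter> {a j..b j} \<noteq> {}"
  shows "\<exists>x. \<forall>i\<in>C. x \<in> {a i..b i}"
proof -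
  have "a j \<le> b i" if "i \<in> C" "j \<in> C" for i j
    using assms(3)[OF that] by auto
  then have "\<forall>i\<in>C. Max (a ` C) \<in> {a i..b i}"
    using assms(1,2) by (auto intro: Max_ge)
  then show ?thesis ..
qed

lemma hsquares_pairwise_intersecting_common_point:
  assumes "finite C" "C \<noteq> {}" "\<And>i. i \<in> C \<Longrightarrow> r i > 0"
    and "\<And>i j. i \<in> C \<Longrightarrow> j \<in> C \<Longrightarrow> hsquare (r i) (p i) \<inter> hsquare (r j) (p j) \<noteq> {}"
  shows "\<exists>z. \<forall>i\<in>C. z \<in> hsquare (r i) (p i)"
proof -
  have overlap: "{fst (p i) - r i..fst (p i) + r i} \<inter> {fst (p j) - r j..fst (p j) + r j} \<noteq> {}"
      "{snd (p i) - r i..snd (p i) + r i} \<inter> {snd (p j) - r j..snd (p j) + r j} \<noteq> {}"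
    if "i \<in> C" "j \<in> C" for i j
    using assms(4)[OF that] by (simp_all add: hsquare_eq_box assms(3) that Times_Int_Times)
  obtain x where "\<forall>i\<in>C. x \<in> {fst (p i) - r i..fst (p i) + r i}"
    using intervals_pairwise_intersecting_common_point[of C "\<lambda>i. fst (p i) - r i" "\<lambda>i. fst (p i) + r i"]
      assms(1,2) overlap(1) by blast
  moreover obtain y where "\<forall>i\<in>C. y \<in> {snd (p i) - r i..snd (p i) + r i}"
    using intervals_pairwise_intersecting_common_point[of C "\<lambda>i. snd (p i) - r i" "\<lambda>i. snd (p i) + r i"]
      assms(1,2) overlap(2) by blast
  ultimately have "\<forall>i\<in>C. (x, y) \<in> hsquare (r i) (p i)"
    by (simp add: hsquare_eq_box assms(3))
  then show ?thesis ..
qed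

text \<open>\<^term>\<open>occupies_side True a b x\<close> says that \<open>(a, b)\<close> contains some \<open>(x, x + \<epsilon>)\<close>,
  \<^term>\<open>occupies_side False a b x\<close> that it contains some \<open>(x - \<epsilon>, x)\<close>.\<close>
definition occupies_side :: "bool \<Rightarrow> real \<Rightarrow> real \<Rightarrow> real \<Rightarrow> bool" where
  "occupies_side s a b x \<longleftrightarrow> (if s then a \<le> x \<and> x < b else a < x \<and> x \<le> b)"

lemma occupies_side_overlap:
  assumes "occupies_side s a b x" "occupies_side s a' b' x"
  shows "{a<..<b} \<inter> {a'<..<b'} \<noteq> {}"
proof (cases s)
  case True
  with assms have "(x + min b b') / 2 \<in> {a<..<b} \<inter> {a'<..<b'}"
    by (auto simp: occupies_side_def)
  then show ?thesis by blast
next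
  case False
  with assms have "(max a a' + x) / 2 \<in> {a<..<b} \<inter> {a'<..<b'}"
    by (auto simp: occupies_side_def)
  then show ?thesis by blast
qed

lemma occupies_some_side: "a \<le> x \<Longrightarrow> x \<le> b \<Longrightarrow> a < b \<Longrightarrow> occupies_side (x < b) a b x"
  by (auto simp: occupies_side_def)

text \<open>\<open>(s, t) \<in> quadrants r p z\<close>: the square reaches into the open quadrant at \<open>z\<close>
  in direction \<open>(s, t)\<close>.\<close>
definition quadrants :: "real \<Rightarrow> real \<times> real \<Rightarrow> real \<times> real \<Rightarrow> (bool \<times> bool) set" where
  "quadrants r p z = {(s, t). occupies_side s (fst p - r) (fst p + r) (fst z) \<and>
                              occupies_side t (snd p - r) (snd p + r) (snd z)}"

lemma quadrants_nonempty:
  assumes "r > 0" "z \<in> hsquare r p"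
  shows "quadrants r p z \<noteq> {}"
proof -
  have "(fst z < fst p + r, snd z < snd p + r) \<in> quadrants r p z"
    using assms by (auto simp: quadrants_def hsquare_eq_box mem_Times_iff intro!: occupies_some_side)
  then show ?thesis by blast
qed

lemma quadrants_disjoint:
  assumes "r > 0" "r' > 0" "interior (hsquare r p) \<inter> interior (hsquare r' p') = {}"
  shows "quadrants r p z \<inter> quadrants r' p' z = {}"
proof (rule ccontr)
  assume "quadrants r p z \<inter> quadrants r' p' z \<noteq> {}"
  then obtain s t where
    x: "occupies_side s (fst p - r) (fst p + r) (fst z)" "occupies_side s (fst p' - r') (fst p' + r') (fst z)"
    and y: "occupies_side t (snd p - r) (snd p + r) (snd z)" "occupies_side t (snd p' - r') (snd p' + r') (snd z)"
    by (auto simp: quadrants_def)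
  have "{fst p - r<..<fst p + r} \<inter> {fst p' - r'<..<fst p' + r'} \<noteq> {}"
    using x by (rule occupies_side_overlap)
  moreover have "{snd p - r<..<snd p + r} \<inter> {snd p' - r'<..<snd p' + r'} \<noteq> {}"
    using y by (rule occupies_side_overlap)
  ultimately show False
    using assms
    by (simp add: interior_hsquare Times_Int_Times)
qed

lemma mem_corners_iff:
  "z \<in> corners r p \<longleftrightarrow> fst z \<in> {fst p - r, fst p + r} \<and> snd z \<in> {snd p - r, snd p + r}"
proof -
  have side: "x \<in> {c - r, c + r} \<longleftrightarrow> (\<exists>s. x = c + s * r \<and> s \<in> {-1, 1})" for x c :: real
    by force
  have "z \<in> corners r p \<longleftrightarrow>
        (\<exists>s. fst z = fst p + s * r \<and> s \<in> {-1, 1}) \<and> (\<exists>t. snd z = snd p + t * r \<and> t \<in> {-1, 1})"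
    unfolding corners_def by (auto simp del: insert_iff simp add: prod_eq_iff)
  then show ?thesis
    by (simp only: side)
qed

lemma corner_if_quadrants_singleton:
  assumes "r > 0" "z \<in> hsquare r p" "quadrants r p z = {q}"
  shows "z \<in> corners r p"
proof -
  have x: "fst p - r \<le> fst z" "fst z \<le> fst p + r" and y: "snd p - r \<le> snd z" "snd z \<le> snd p + r"
    using assms(1,2) by (auto simp: hsquare_eq_box mem_Times_iff)
  have "fst z \<in> {fst p - r, fst p + r}"
  proof (rule ccontr)
    assume "fst z \<notin> {fst p - r, fst p + r}"
    with x have "occupies_side s (fst p - r) (fst p + r) (fst z)" for s
      by (auto simp: occupies_side_def)
    with y assms(1) have "(True, snd z < snd p + r) \<in> quadrants r p z"
        "(False, snd z < snd p + r) \<in> quadrants r p z"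
      by (auto simp: quadrants_def intro!: occupies_some_side)
    with assms(3) show False by auto
  qed
  moreover have "snd z \<in> {snd p - r, snd p + r}"
  proof (rule ccontr)
    assume "snd z \<notin> {snd p - r, snd p + r}"
    with y have "occupies_side t (snd p - r) (snd p + r) (snd z)" for t
      by (auto simp: occupies_side_def)
    with x assms(1) have "(fst z < fst p + r, True) \<in> quadrants r p z"
        "(fst z < fst p + r, False) \<in> quadrants r p z"
      by (auto simp: quadrants_def intro!: occupies_some_side)
    with assms(3) show False by auto
  qed
  ultimately show ?thesis
    by (simp add: mem_corners_iff)
qed

lemma disjoint_family_on_nonempty_choice:
  assumes "disjoint_family_on Q C" "\<And>i. i \<in> C \<Longrightarrow> Q i \<noteq> {}"
  obtains f where "inj_on f C" "\<And>i. i \<in> C \<Longrightarrow> f i \<in> Q i"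
proof -
  define f where "f i = (SOME q. q \<in> Q i)" for i
  have f: "f i \<in> Q i" if "i \<in> C" for i
    using assms(2)[OF that] unfolding f_def by (simp add: some_in_eq)
  have "inj_on f C"
    using assms(1) f by (fastforce simp: inj_on_def disjoint_family_on_def)
  then show thesis using f by (rule that)
qed

lemma disjoint_family_on_card_le_CARD:
  fixes Q :: "'i \<Rightarrow> 'a::finite set"
  assumes "disjoint_family_on Q C" "\<And>i. i \<in> C \<Longrightarrow> Q i \<noteq> {}"
  shows "card C \<le> CARD('a)"
proof -
  obtain f :: "'i \<Rightarrow> 'a" where "inj_on f C"
    using disjoint_family_on_nonempty_choice[OF assms] by metis
  then show ?thesis by (simp add: card_inj_on_le)
qed

lemma disjoint_family_on_card_eq_CARD_singletons:
  fixes Q :: "'i \<Rightarrow> 'a::finite set"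
  assumes "disjoint_family_on Q C" "\<And>i. i \<in> C \<Longrightarrow> Q i \<noteq> {}"
    and "card C = CARD('a)" "i \<in> C"
  shows "\<exists>q. Q i = {q}"
proof -
  obtain f where inj: "inj_on f C" and f: "\<And>i. i \<in> C \<Longrightarrow> f i \<in> Q i"
    using disjoint_family_on_nonempty_choice[OF assms(1,2)] by metis
  have "finite C"
    by (rule card_ge_0_finite) (simp add: assms(3) finite_UNIV_card_ge_0)
  then have "f ` C = UNIV"
    using inj assms(3) by (simp add: card_image card_subset_eq)
  have "q = f i" if "q \<in> Q i" for q
  proof -
    obtain j where "j \<in> C" "q = f j"
      using \<open>f ` C = UNIV\<close> by (metis UNIV_I imageE)
    with that f assms(1,4) have "j = i"
      by (auto simp: disjoint_family_on_def)
    with \<open>q = f j\<close> show ?thesis by simp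
  qed
  with f[OF assms(4)] show ?thesis by blast
qed

lemma clique_hsquares_intersect:
  assumes "homothetic_packing n r p" "is_clique n r p C" "i \<in> C" "j \<in> C"
  shows "hsquare (r i) (p i) \<inter> hsquare (r j) (p j) \<noteq> {}"
proof (cases "i = j")
  case True
  have "r i > 0"
    using assms unfolding homothetic_packing_def is_clique_def by auto
  then have "p i \<in> hsquare (r i) (p i)"
    by (simp add: hsquare_eq_box mem_Times_iff)
  with True show ?thesis by blast
next
  case False
  with assms(2-4) show ?thesis
    by (auto simp: is_clique_def contact_edge_def)
qed

lemma packing_clique_quadrants:
  assumes "homothetic_packing n r p" "is_clique n r p C" "C \<noteq> {}"
  obtains z where "\<And>i. i \<in> C \<Longrightarrow> r i > 0" "\<And>i. i \<in> C \<Longrightarrow> z \<in> hsquare (r i) (p i)"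
    and "disjoint_family_on (\<lambda>i. quadrants (r i) (p i) z) C"
    and "\<And>i. i \<in> C \<Longrightarrow> quadrants (r i) (p i) z \<noteq> {}"
proof -
  have C: "C \<subseteq> {1..n}" "finite C"
    using assms(2) finite_subset unfolding is_clique_def by auto
  then have pos: "\<And>i. i \<in> C \<Longrightarrow> r i > 0"
    using assms(1) unfolding homothetic_packing_def by auto
  obtain z where "\<forall>i\<in>C. z \<in> hsquare (r i) (p i)"
    using hsquares_pairwise_intersecting_common_point[of C r p, OF C(2) assms(3) pos
        clique_hsquares_intersect[OF assms(1,2)]] ..
  then have z: "\<And>i. i \<in> C \<Longrightarrow> z \<in> hsquare (r i) (p i)" ..
  have disjoint: "disjoint_family_on (\<lambda>i. quadrants (r i) (p i) z) C"
    unfolding disjoint_family_on_def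
  proof (intro ballI impI)
    fix i j
    assume "i \<in> C" "j \<in> C" "i \<noteq> j"
    with assms(1) C(1) have "interior (hsquare (r i) (p i)) \<inter> interior (hsquare (r j) (p j)) = {}"
      unfolding homothetic_packing_def by blast
    with pos[OF \<open>i \<in> C\<close>] pos[OF \<open>j \<in> C\<close>]
    show "quadrants (r i) (p i) z \<inter> quadrants (r j) (p j) z = {}"
      by (rule quadrants_disjoint)
  qed
  have nonempty: "\<And>i. i \<in> C \<Longrightarrow> quadrants (r i) (p i) z \<noteq> {}"
    using pos z by (rule quadrants_nonempty)
  show thesis
    by (rule that) (fact pos z disjoint nonempty)+
qed

theorem lemma9:
  fixes n :: nat and r :: "nat \<Rightarrow> real" and p :: "nat \<Rightarrow> real \<times> real"
  assumes "homothetic_packing n r p"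
  shows "(\<forall>C. is_clique n r p C \<longrightarrow> card C \<le> 4) \<and>
         (\<forall>C. is_clique n r p C \<and> card C = 4 \<longrightarrow> share_corner r p C)"
proof -
  have "card C \<le> 4 \<and> (card C = 4 \<longrightarrow> share_corner r p C)"
    if clique: "is_clique n r p C" "C \<noteq> {}" for C
  proof -
    obtain z where pos: "\<And>i. i \<in> C \<Longrightarrow> r i > 0"
      and z: "\<And>i. i \<in> C \<Longrightarrow> z \<in> hsquare (r i) (p i)"
      and disjoint: "disjoint_family_on (\<lambda>i. quadrants (r i) (p i) z) C"
      and nonempty: "\<And>i. i \<in> C \<Longrightarrow> quadrants (r i) (p i) z \<noteq> {}"
      using packing_clique_quadrants[OF assms clique] by blast
    have "card C \<le> 4"
      using disjoint_family_on_card_le_CARD[OF disjoint nonempty] by simp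
    moreover have "share_corner r p C" if "card C = CARD(bool \<times> bool)"
    proof -
      have "\<exists>q. quadrants (r i) (p i) z = {q}" if "i \<in> C" for i
        using disjoint_family_on_card_eq_CARD_singletons[OF disjoint nonempty] \<open>card C = _\<close> that
        by blast
      then have "\<forall>i\<in>C. z \<in> corners (r i) (p i)"
        using pos z corner_if_quadrants_singleton by blast
      then show ?thesis
        unfolding share_corner_def ..
    qed
    ultimately show ?thesis by simp
  qed
  then show ?thesis
    by fastforce
qed

end
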